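(* Let $G=(N,T,F,P,S)$ be a grounded indexed grammar, $D$ a derivation tree of $G$ (with some set of marked positions of its yield), and let $R$ be the set of $3$-tuples $(\tau_1,\tau_2,\tau_3)$ of pairwise disjoint subsets of $N$ with union $N$. For every $W\subseteq N\times N\times R$, every limited controlled descent in $D$ which respects $W$ has at most $(|N|\cdot 3^{|N|})^{|W|+1}$ splits.
   Context: An indexed grammar $G=(N,T,F,P,S)$ has finite alphabets $N$ (nonterminals), $T$ (terminals), $F$ (stack symbols), start symbol $S$, and productions of the forms $A\to r$, $A\to Bf$, $Af\to r$ ($A,B\in N$, $f\in F$, $r\in(N\cup T)^*$); nonterminals carry stacks $x\in F^*$ (written $Ax$, top first); applying $A\to r$ to $Ax$ gives $r$ with each nonterminal $C$ replaced by $Cx$; $A\to Bf$ turns $Ax$ into $Bfx$; $Af\to r$ turns $Afy$ into $r$ with each nonterminal $C$ replaced by $Cy$. $G$ is grounded if there is $\$\in F$ such that all productions have the forms $S\to A\$$, $A\to r$, $A\to Bf$, $Af\to r$, $A\$\to s$ with $A,B\in N\setminus\{S\}$, $f\in F\setminus\{\$\}$, $r\in(N\setminus\{S\})^+$, $s\in T^*$. A derivation tree is an ordered tree with root labelled $S$ (empty stack), internal nodes labelled in $NF^*$, leaves labelled in $T^*$, where the children of each internal node are obtained from its label by one production (a production $A\$\to s'$ yields a single leaf labelled $s'$); its yield is the concatenation of leaf labels. Marking: a leaf is marked if its label contains a marked position of the yield; an internal node is marked if it has a marked descendant; a branch node is a node with more than one marked child. For an internal node $v$ labelled $Ax$: $\sigma(v)=A$,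 $\eta(v)=|x|$; $v'$ is in the scope of $v$ iff $v'$ is internal and there is a downward path from $v$ to $v'$ all of whose nodes $v''$ (including $v'$) satisfy $\eta(v'')\ge \eta(v)$; $\beta(v)$ is the set of nodes in the scope of $v$ none of whose children is in the scope of $v$; $\tau(v)=(\tau_1,\tau_2,\tau_3)\in R$ with $\tau_1=\{A:\sigma(v')\ne A\ \forall v'\in\beta(v)\}$, $\tau_2=\{A:\exists v'\in\beta(v),\sigma(v')=A$, and no marked $v'\in\beta(v)$ has $\sigma(v')=A\}$, $\tau_3=\{A:\exists$ marked $v'\in\beta(v)$ with $\sigma(v')=A\}$. A descent is a list of internal nodes $H=(v_0,\dots,v_m)$, $m\ge0$, with $v_m\in\beta(v_0)$ and each $v_i$ ($i\ge1$) a (not necessarily immediate) descendant of $v_{i-1}$; it is controlled if each $v_i$ ($i\ge 1$) is a child of $v_{i-1}$. For $0\le i<m$ there is a split between $i$ and $i+1$ iff some node on the tree path from $v_i$ (inclusive) to $v_{i+1}$ (exclusive) is a branch node; the number of splits of $H$ is the number of such $i$. $H$ is limited iff for all $0\le b_1<t_1<t_2\le b_2\le m$ with $\sigma(v_{b_1})=\sigma(v_{t_1})$, $\sigma(v_{t_2})=\sigma(v_{b_2})$, $v_{b_2}\in\beta(v_{b_1})$, $v_{t_2}\in\beta(v_{t_1})$ and $\tau(v_{b_1})=\tau(v_{t_1})$, there is no split between $i$ and $i+1$ for any $b_1\le i<t_1$ or $t_2\le i<b_2$. $H$ respects $W$ iff for all $0\le i<j\le m$ with $v_j\in\beta(v_i)$,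 the triple $(\sigma(v_i),\sigma(v_j),\tau(v_i))$ lies in $W$. *)

theory Defs
  imports Main "HOL-Library.Sublist"
begin

datatype ('n, 't) sym = NT 'n | TM 't

text \<open>Productions: A -> r, A -> B f, A f -> r.\<close>
datatype ('n, 't, 'f) prod =
    Plain 'n "('n, 't) sym list"
  | Push 'n 'n 'f
  | Pop 'n 'f "('n, 't) sym list"

definition syms :: "'n set \<Rightarrow> 't set \<Rightarrow> ('n, 't) sym set" where
  "syms N T = NT ` N \<union> TM ` T"

definition prod_ok :: "'n set \<Rightarrow> 't set \<Rightarrow> 'f set \<Rightarrow> ('n, 't, 'f) prod \<Rightarrow> bool" where
  "prod_ok N T F p = (case p of
      Plain A r \<Rightarrow> A \<in> N \<and> set r \<subseteq> syms N T
    | Push A B f \<Rightarrow> A \<in> N \<and> B \<in> N \<and> f \<in> F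
    | Pop A f r \<Rightarrow> A \<in> N \<and> f \<in> F \<and> set r \<subseteq> syms N T)"

definition indexed_grammar ::
  "'n set \<Rightarrow> 't set \<Rightarrow> 'f set \<Rightarrow> ('n, 't, 'f) prod set \<Rightarrow> 'n \<Rightarrow> bool" where
  "indexed_grammar N T F P S =
     (finite N \<and> finite T \<and> finite F \<and> finite P \<and> S \<in> N \<and> (\<forall>p\<in>P. prod_ok N T F p))"

text \<open>Grounded: there is a bottom symbol d (the paper's dollar) such that all productions
  have the forms S -> A d, A -> r, A -> B f, A f -> r, A d -> s.\<close>
definition grounded ::
  "'n set \<Rightarrow> 't set \<Rightarrow> 'f set \<Rightarrow> ('n, 't, 'f) prod set \<Rightarrow> 'n \<Rightarrow> bool" where
  "grounded N T F P S =
     (indexed_grammar N T F P S \<and>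
      (\<exists>d\<in>F. \<forall>p\<in>P. (case p of
          Push A B f \<Rightarrow> (A = S \<and> B \<in> N - {S} \<and> f = d)
                      \<or> (A \<in> N - {S} \<and> B \<in> N - {S} \<and> f \<in> F - {d})
        | Plain A r \<Rightarrow> A \<in> N - {S} \<and> r \<noteq> [] \<and> set r \<subseteq> NT ` (N - {S})
        | Pop A f r \<Rightarrow> A \<in> N - {S} \<and>
                      ((f \<in> F - {d} \<and> r \<noteq> [] \<and> set r \<subseteq> NT ` (N - {S}))
                       \<or> (f = d \<and> set r \<subseteq> TM ` T)))))"

text \<open>Internal nodes carry a nonterminal and a stack (top first); leaves carry a terminal word.\<close>
datatype ('n, 't, 'f) dtree = DNode 'n "'f list" "('n, 't, 'f) dtree list" | DLeaf "'t list"

fun node_lab :: "('n, 't, 'f) dtree \<Rightarrow> ('n \<times> 'f list) option" where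
  "node_lab (DNode A x ts) = Some (A, x)"
| "node_lab (DLeaf s) = None"

definition nodes_for :: "'n list \<Rightarrow> 'f list \<Rightarrow> ('n, 't, 'f) dtree list \<Rightarrow> bool" where
  "nodes_for cs x ts = list_all2 (\<lambda>C t. node_lab t = Some (C, x)) cs ts"

text \<open>The children of a node labelled A x are obtained by one production; a production
  A d -> s (right-hand side consisting of terminals) yields a single leaf labelled s.\<close>
definition step_ok :: "('n, 't, 'f) prod set \<Rightarrow> 'n \<Rightarrow> 'f list \<Rightarrow> ('n, 't, 'f) dtree list \<Rightarrow> bool" where
  "step_ok P A x ts = (\<exists>p\<in>P. case p of
      Plain B r \<Rightarrow> B = A \<and> (\<exists>cs. r = map NT cs \<and> nodes_for cs x ts)
    | Push B C f \<Rightarrow> B = A \<and> (\<exists>t. ts = [t] \<and> node_lab t = Some (C, f # x))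
    | Pop B f r \<Rightarrow> B = A \<and> (\<exists>y. x = f # y \<and>
          ((\<exists>s. r = map TM s \<and> ts = [DLeaf s])
           \<or> (\<exists>cs. cs \<noteq> [] \<and> r = map NT cs \<and> nodes_for cs y ts))))"

fun valid :: "('n, 't, 'f) prod set \<Rightarrow> ('n, 't, 'f) dtree \<Rightarrow> bool" where
  "valid P (DLeaf s) = True"
| "valid P (DNode A x ts) = (step_ok P A x ts \<and> (\<forall>t\<in>set ts. valid P t))"

definition is_dtree :: "('n, 't, 'f) prod set \<Rightarrow> 'n \<Rightarrow> ('n, 't, 'f) dtree \<Rightarrow> bool" where
  "is_dtree P S D = (valid P D \<and> node_lab D = Some (S, []))"

fun yield :: "('n, 't, 'f) dtree \<Rightarrow> 't list" where
  "yield (DLeaf s) = s"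
| "yield (DNode A x ts) = concat (map yield ts)"

fun subt :: "('n, 't, 'f) dtree \<Rightarrow> nat list \<Rightarrow> ('n, 't, 'f) dtree option" where
  "subt t [] = Some t"
| "subt (DLeaf s) (i # p) = None"
| "subt (DNode A x ts) (i # p) = (if i < length ts then subt (ts ! i) p else None)"

fun offs :: "('n, 't, 'f) dtree \<Rightarrow> nat list \<Rightarrow> nat" where
  "offs t [] = 0"
| "offs (DLeaf s) (i # p) = 0"
| "offs (DNode A x ts) (i # p) =
     (if i < length ts then sum_list (map (length \<circ> yield) (take i ts)) + offs (ts ! i) p else 0)"

definition internal :: "('n, 't, 'f) dtree \<Rightarrow> nat list \<Rightarrow> bool" where
  "internal D v = (\<exists>A x ts. subt D v = Some (DNode A x ts))"

definition sigma :: "('n, 't, 'f) dtree \<Rightarrow> nat list \<Rightarrow> 'n" where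
  "sigma D v = fst (the (node_lab (the (subt D v))))"

definition eta :: "('n, 't, 'f) dtree \<Rightarrow> nat list \<Rightarrow> nat" where
  "eta D v = length (snd (the (node_lab (the (subt D v)))))"

definition child :: "('n, 't, 'f) dtree \<Rightarrow> nat list \<Rightarrow> nat list \<Rightarrow> bool" where
  "child D v w = (\<exists>i. w = v @ [i] \<and> subt D w \<noteq> None)"

text \<open>M is the set of marked positions (0-based indices) of the yield.\<close>
definition leaf_marked :: "('n, 't, 'f) dtree \<Rightarrow> nat set \<Rightarrow> nat list \<Rightarrow> bool" where
  "leaf_marked D M v = (\<exists>s. subt D v = Some (DLeaf s) \<and>
      (\<exists>k\<in>M. offs D v \<le> k \<and> k < offs D v + length s))"

inductive marked :: "('n, 't, 'f) dtree \<Rightarrow> nat set \<Rightarrow> nat list \<Rightarrow> bool" for D M where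
  leaf: "leaf_marked D M v \<Longrightarrow> marked D M v"
| inner: "internal D v \<Longrightarrow> strict_prefix v w \<Longrightarrow> marked D M w \<Longrightarrow> marked D M v"

definition branch :: "('n, 't, 'f) dtree \<Rightarrow> nat set \<Rightarrow> nat list \<Rightarrow> bool" where
  "branch D M v = (card {w. child D v w \<and> marked D M w} > 1)"

definition scope :: "('n, 't, 'f) dtree \<Rightarrow> nat list \<Rightarrow> nat list \<Rightarrow> bool" where
  "scope D v v' = (internal D v \<and> internal D v' \<and> prefix v v' \<and>
      (\<forall>u. prefix v u \<and> prefix u v' \<longrightarrow> eta D u \<ge> eta D v))"

definition beta :: "('n, 't, 'f) dtree \<Rightarrow> nat list \<Rightarrow> nat list set" where
  "beta D v = {v'. scope D v v' \<and> (\<forall>w. child D v' w \<longrightarrow> \<not> scope D v w)}"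

definition tau :: "'n set \<Rightarrow> ('n, 't, 'f) dtree \<Rightarrow> nat set \<Rightarrow> nat list \<Rightarrow> 'n set \<times> 'n set \<times> 'n set" where
  "tau N D M v =
     ({A\<in>N. \<forall>v'\<in>beta D v. sigma D v' \<noteq> A},
      {A\<in>N. (\<exists>v'\<in>beta D v. sigma D v' = A) \<and> \<not> (\<exists>v'\<in>beta D v. marked D M v' \<and> sigma D v' = A)},
      {A\<in>N. \<exists>v'\<in>beta D v. marked D M v' \<and> sigma D v' = A})"

definition Rtrip :: "'n set \<Rightarrow> ('n set \<times> 'n set \<times> 'n set) set" where
  "Rtrip N = {(a, b, c). a \<inter> b = {} \<and> a \<inter> c = {} \<and> b \<inter> c = {} \<and> a \<union> b \<union> c = N}"

section \<open>Descents (H = [v_0, ..., v_m], m = length H - 1)\<close>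

definition descent :: "('n, 't, 'f) dtree \<Rightarrow> nat list list \<Rightarrow> bool" where
  "descent D H = (H \<noteq> [] \<and> (\<forall>v\<in>set H. internal D v) \<and> last H \<in> beta D (hd H) \<and>
      (\<forall>i. 0 < i \<and> i < length H \<longrightarrow> strict_prefix (H ! (i - 1)) (H ! i)))"

definition controlled :: "('n, 't, 'f) dtree \<Rightarrow> nat list list \<Rightarrow> bool" where
  "controlled D H = (descent D H \<and> (\<forall>i. 0 < i \<and> i < length H \<longrightarrow> child D (H ! (i - 1)) (H ! i)))"

text \<open>Split between i and i+1.\<close>
definition split_at :: "('n, 't, 'f) dtree \<Rightarrow> nat set \<Rightarrow> nat list list \<Rightarrow> nat \<Rightarrow> bool" where
  "split_at D M H i = (\<exists>u. prefix (H ! i) u \<and> strict_prefix u (H ! Suc i) \<and> branch D M u)"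

definition nsplits :: "('n, 't, 'f) dtree \<Rightarrow> nat set \<Rightarrow> nat list list \<Rightarrow> nat" where
  "nsplits D M H = card {i. Suc i < length H \<and> split_at D M H i}"

definition limited :: "'n set \<Rightarrow> ('n, 't, 'f) dtree \<Rightarrow> nat set \<Rightarrow> nat list list \<Rightarrow> bool" where
  "limited N D M H = (\<forall>b1 t1 t2 b2. b1 < t1 \<and> t1 < t2 \<and> t2 \<le> b2 \<and> b2 < length H
      \<and> sigma D (H ! b1) = sigma D (H ! t1) \<and> sigma D (H ! t2) = sigma D (H ! b2)
      \<and> H ! b2 \<in> beta D (H ! b1) \<and> H ! t2 \<in> beta D (H ! t1)
      \<and> tau N D M (H ! b1) = tau N D M (H ! t1)
      \<longrightarrow> (\<forall>i. b1 \<le> i \<and> i < t1 \<longrightarrow> \<not> split_at D M H i)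
        \<and> (\<forall>i. t2 \<le> i \<and> i < b2 \<longrightarrow> \<not> split_at D M H i))"

definition respects_W :: "'n set \<Rightarrow> ('n, 't, 'f) dtree \<Rightarrow> nat set
    \<Rightarrow> ('n \<times> 'n \<times> ('n set \<times> 'n set \<times> 'n set)) set \<Rightarrow> nat list list \<Rightarrow> bool" where
  "respects_W N D M W H = (\<forall>i j. i < j \<and> j < length H \<and> H ! j \<in> beta D (H ! i)
      \<longrightarrow> (sigma D (H ! i), sigma D (H ! j), tau N D M (H ! i)) \<in> W)"

end

theory Submission
  imports Defs "HOL-Library.FuncSet"
begin

text \<open>
  Along a controlled descent \<open>v\<^sub>0, \<dots>, v\<^sub>m\<close> the stack height \<open>h i = \<eta>(v\<^sub>i)\<close> grows by at most
  one per step, and \<open>v\<^sub>k \<in> \<beta>(v\<^sub>i)\<close> holds exactly when \<open>k\<close> ends the scope of \<open>i\<close>: the heights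
  on \<open>[i, k]\<close> stay \<open>\<ge> h i\<close> and drop below \<open>h i\<close> right after \<open>k\<close>. Scopes nest like parentheses.
  Given a scope \<open>[t, e]\<close> of type \<open>(\<sigma> t, \<sigma> e, \<tau> t) \<in> W\<close>, limitedness forbids splits outside an
  inner scope of the same type, so we may pass to the innermost one. All scopes strictly inside
  it have types in \<open>W - {(\<sigma> t, \<sigma> e, \<tau> t)}\<close> and, by induction on \<open>|W|\<close>, contain at most
  \<open>K ^ |W| - 3\<close> splits, where \<open>K = |N| * 3 ^ |N|\<close> bounds the number of labels \<open>(\<sigma>, \<tau>)\<close>.
  Walking along the base level of \<open>[t, e]\<close>, limitedness again rules out splits between two
  positions with the same label, so each label is charged one inner scope and at most two
  further splits; in total \<open>K * (K ^ |W| - 1) \<le> K ^ (|W| + 1) - 3\<close>.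
\<close>

section \<open>Scopes in a sequence of heights\<close>

definition scope_end :: "nat \<Rightarrow> (nat \<Rightarrow> nat) \<Rightarrow> nat \<Rightarrow> nat \<Rightarrow> bool" where
  "scope_end m h i k \<longleftrightarrow> i \<le> k \<and> k \<le> m \<and> (\<forall>l. i \<le> l \<and> l \<le> k \<longrightarrow> h i \<le> h l)
     \<and> (k = m \<or> h (Suc k) < h i)"

lemma scope_end_exists:
  assumes "i \<le> m"
  obtains k where "scope_end m h i k"
proof -
  let ?stop = "\<lambda>k. i \<le> k \<and> (k = m \<or> h (Suc k) < h i)"
  define k where "k = (LEAST k. ?stop k)"
  have "?stop m" using assms by simp
  then have stop: "?stop k" and "k \<le> m"
    unfolding k_def by (rule LeastI, rule Least_le)
  have "h i \<le> h j" if "i \<le> j" "j \<le> k" for j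
    using that(1)
  proof (induction j rule: dec_induct)
    case (step l)
    have "l < k" using step.hyps(2) that(2) by simp
    then have "\<not> ?stop l" unfolding k_def by (rule not_less_Least)
    with step show ?case by auto
  qed simp
  with stop \<open>k \<le> m\<close> show ?thesis using that unfolding scope_end_def by blast
qed

lemma scope_end_nested:
  assumes "scope_end m h t e" "t \<le> s" "s \<le> e" "scope_end m h s k"
  shows "k \<le> e"
proof (rule ccontr)
  assume "\<not> k \<le> e"
  with assms have "h (Suc e) < h t" "h t \<le> h s" "h s \<le> h (Suc e)"
    unfolding scope_end_def by auto
  then show False by simp
qed

lemma scope_end_same_height:
  "scope_end m h t e \<Longrightarrow> t \<le> q \<Longrightarrow> q \<le> e \<Longrightarrow> h q = h t \<Longrightarrow> scope_end m h q e"
  unfolding scope_end_def by auto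

lemma scope_end_unique:
  assumes "scope_end m h i k" "scope_end m h i k'"
  shows "k = k'"
proof -
  have "i \<le> k" "i \<le> k'" using assms unfolding scope_end_def by auto
  then show ?thesis using scope_end_nested[OF assms(1) _ _ assms(2)] scope_end_nested[OF assms(2) _ _ assms(1)]
    by simp
qed

section \<open>Counting splits\<close>

lemma card_Int_atLeastLessThan_split:
  fixes a b c :: nat
  assumes "a \<le> b" "b \<le> c"
  shows "card (A \<inter> {a..<c}) \<le> card (A \<inter> {a..<b}) + card (A \<inter> {b..<c})"
proof -
  have "A \<inter> {a..<c} = (A \<inter> {a..<b}) \<union> (A \<inter> {b..<c})" using assms by auto
  then show ?thesis by (simp add: card_Un_le)
qed

lemma card_Int_atLeastLessThan_Suc:
  assumes "a < c"
  shows "card (A \<inter> {a..<c}) \<le> Suc (card (A \<inter> {Suc a..<c}))"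
proof -
  have "card (A \<inter> {a..<Suc a}) \<le> card {a}"
    by (rule card_mono) auto
  then show ?thesis using card_Int_atLeastLessThan_split[of a "Suc a" c A] assms by simp
qed

lemma pow_minus_three_step:
  fixes K n :: nat
  assumes "3 \<le> K" "0 < n"
  shows "K * (K ^ n - 3 + 2) \<le> K ^ (n + 1) - 3"
proof -
  have "K \<le> K ^ n" using assms by (simp add: self_le_power)
  then show ?thesis using assms(1) by (simp add: algebra_simps)
qed

text \<open>
  The combinatorial skeleton of a descent \<open>v\<^sub>0, \<dots>, v\<^sub>m\<close>: \<open>h i\<close> is the stack height
  \<open>\<eta>(v\<^sub>i)\<close>, \<open>splits\<close> the set of \<open>i\<close> with a split between \<open>i\<close> and \<open>i + 1\<close>, and \<open>\<sigma>\<close>, \<open>\<tau>\<close>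
  the labels of the \<open>v\<^sub>i\<close>; \<open>scope_end m h i k\<close> stands for \<open>v\<^sub>k \<in> \<beta>(v\<^sub>i)\<close>.
\<close>

locale limited_profile =
  fixes m :: nat and h :: "nat \<Rightarrow> nat" and splits :: "nat set"
    and \<sigma> :: "nat \<Rightarrow> 'a" and \<tau> :: "nat \<Rightarrow> 'b"
  assumes height_Suc_le: "i < m \<Longrightarrow> h (Suc i) \<le> Suc (h i)"
    and no_split: "\<lbrakk>scope_end m h b1 b2; scope_end m h t1 t2; b1 < t1; t1 < t2; t2 \<le> b2;
      \<sigma> b1 = \<sigma> t1; \<sigma> t2 = \<sigma> b2; \<tau> b1 = \<tau> t1; b1 \<le> i \<and> i < t1 \<or> t2 \<le> i \<and> i < b2\<rbrakk>
      \<Longrightarrow> i \<notin> splits"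
begin

definition level_labels :: "nat \<Rightarrow> nat \<Rightarrow> nat \<Rightarrow> ('a \<times> 'b) set" where
  "level_labels c p e = (\<lambda>q. (\<sigma> q, \<tau> q)) ` {q. p \<le> q \<and> q < e \<and> h q = c}"

lemma finite_level_labels: "finite (level_labels c p e)"
  unfolding level_labels_def by (rule finite_imageI) (rule finite_subset[of _ "{..<e}"], auto)

lemma splits_repeat_label:
  assumes "scope_end m h t e" "t \<le> p" "p < q" "q < e" "h p = h t" "h q = h t"
    and "\<sigma> p = \<sigma> q" "\<tau> p = \<tau> q"
  shows "splits \<inter> {p..<e} = splits \<inter> {q..<e}"
proof -
  have "scope_end m h p e" "scope_end m h q e"
    using scope_end_same_height[OF assms(1)] assms(2-6) by auto
  then have "i \<notin> splits" if "p \<le> i" "i < q" for i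
    using no_split[of p e q e i] that assms(3,4,7,8) by auto
  then have "splits \<inter> {p..<q} = {}" by auto
  moreover have "{p..<e} = {p..<q} \<union> {q..<e}" using assms(3,4) by auto
  ultimately show ?thesis by blast
qed

lemma splits_next_level:
  assumes te: "scope_end m h t e" "t \<le> p" "p < e" "h p = h t"
    and inner: "\<And>s k. t < s \<Longrightarrow> scope_end m h s k \<Longrightarrow> k \<le> e \<Longrightarrow> card (splits \<inter> {s..<k}) \<le> E"
  obtains p' where "p < p'" "p' \<le> e" "p' < e \<Longrightarrow> h p' = h t"
    "card (splits \<inter> {p..<e}) \<le> card (splits \<inter> {p'..<e}) + (E + 2)"
proof -
  have split_p: "card (splits \<inter> {p..<e}) \<le> Suc (card (splits \<inter> {Suc p..<e}))"
    using card_Int_atLeastLessThan_Suc \<open>p < e\<close> .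
  have "p < m" "h t \<le> h (Suc p)" using te unfolding scope_end_def by auto
  consider (level) "h (Suc p) = h t" | (up) "h (Suc p) = Suc (h t)"
    using height_Suc_le[OF \<open>p < m\<close>] \<open>h t \<le> h (Suc p)\<close> \<open>h p = h t\<close> by linarith
  then show thesis
  proof cases
    case level
    show thesis by (rule that[of "Suc p"]) (use level split_p \<open>p < e\<close> in auto)
  next
    case up
    have "Suc p \<le> m" using \<open>p < m\<close> by simp
    then obtain k where k: "scope_end m h (Suc p) k" by (rule scope_end_exists)
    have "k \<le> e" using scope_end_nested[OF te(1) _ _ k] te(2,3) by simp
    have bump: "card (splits \<inter> {Suc p..<k}) \<le> E" using inner[OF _ k \<open>k \<le> e\<close>] te(2) by simp
    show thesis
    proof (cases "k = e")
      case True
      show thesis by (rule that[of e]) (use True split_p bump \<open>p < e\<close> in auto)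
    next
      case False
      then have "k < e" "Suc p \<le> k" using \<open>k \<le> e\<close> k unfolding scope_end_def by auto
      have "h t \<le> h (Suc k)" using te \<open>k < e\<close> \<open>Suc p \<le> k\<close> unfolding scope_end_def by simp
      moreover have "h (Suc k) < h (Suc p)" using k \<open>k < e\<close> te(1) unfolding scope_end_def by auto
      ultimately have "h (Suc k) = h t" using up by simp
      moreover have "card (splits \<inter> {Suc p..<e}) \<le> card (splits \<inter> {Suc p..<k}) + Suc (card (splits \<inter> {Suc k..<e}))"
        using card_Int_atLeastLessThan_split[OF \<open>Suc p \<le> k\<close>, of e splits]
          card_Int_atLeastLessThan_Suc[OF \<open>k < e\<close>, of splits] \<open>k < e\<close> by simp
      ultimately show thesis
        by (intro that[of "Suc k"]) (use split_p bump \<open>k < e\<close> \<open>Suc p \<le> k\<close> in auto)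
    qed
  qed
qed

lemma card_level_labels_less:
  assumes "p < p'" "p < e" "h p = c"
    and fresh: "\<And>q. p < q \<Longrightarrow> q < e \<Longrightarrow> h q = c \<Longrightarrow> (\<sigma> q, \<tau> q) \<noteq> (\<sigma> p, \<tau> p)"
  shows "card (level_labels c p' e) < card (level_labels c p e)"
proof -
  have "level_labels c p' e \<subseteq> level_labels c p e"
    using assms(1) unfolding level_labels_def by auto
  moreover have "(\<sigma> p, \<tau> p) \<in> level_labels c p e"
    using assms(2,3) unfolding level_labels_def by auto
  moreover have "(\<sigma> p, \<tau> p) \<notin> level_labels c p' e"
  proof
    assume "(\<sigma> p, \<tau> p) \<in> level_labels c p' e"
    then obtain q where "p' \<le> q" "q < e" "h q = c" "(\<sigma> q, \<tau> q) = (\<sigma> p, \<tau> p)"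
      unfolding level_labels_def by auto
    then show False using fresh[of q] assms(1) by simp
  qed
  ultimately have "level_labels c p' e \<subset> level_labels c p e" by blast
  then show ?thesis by (rule psubset_card_mono[OF finite_level_labels])
qed

lemma level_labels_subset:
  assumes "scope_end m h t e"
    and types: "\<And>q. t \<le> q \<Longrightarrow> q < e \<Longrightarrow> scope_end m h q e \<Longrightarrow> (\<sigma> q, \<sigma> e, \<tau> q) \<in> W"
    and labels: "\<And>a b c. (a, b, c) \<in> W \<Longrightarrow> (a, c) \<in> L"
  shows "level_labels (h t) t e \<subseteq> L"
proof
  fix x assume "x \<in> level_labels (h t) t e"
  then obtain q where "t \<le> q" "q < e" "h q = h t" "x = (\<sigma> q, \<tau> q)"
    unfolding level_labels_def by blast
  moreover have "scope_end m h q e" using scope_end_same_height[OF assms(1)] calculation by simp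
  ultimately show "x \<in> L" using types labels by blast
qed

lemma splits_le_level_labels:
  assumes te: "scope_end m h t e"
    and inner: "\<And>s k. t < s \<Longrightarrow> scope_end m h s k \<Longrightarrow> k \<le> e \<Longrightarrow> card (splits \<inter> {s..<k}) \<le> E"
    and "t \<le> p" "p \<le> e" "h p = h t"
  shows "card (splits \<inter> {p..<e}) \<le> card (level_labels (h t) p e) * (E + 2)"
  using assms(3-5)
proof (induction "e - p" arbitrary: p rule: less_induct)
  case less
  show ?case
  proof (cases "p < e")
    case True
    consider (repeat) q where "p < q" "q < e" "h q = h t" "\<sigma> q = \<sigma> p" "\<tau> q = \<tau> p"
      | (fresh) "\<And>q. p < q \<Longrightarrow> q < e \<Longrightarrow> h q = h t \<Longrightarrow> (\<sigma> q, \<tau> q) \<noteq> (\<sigma> p, \<tau> p)"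
      by blast
    then show ?thesis
    proof cases
      case repeat
      have "level_labels (h t) q e \<subseteq> level_labels (h t) p e"
        using repeat unfolding level_labels_def by auto
      then have "card (level_labels (h t) q e) \<le> card (level_labels (h t) p e)"
        by (rule card_mono[OF finite_level_labels])
      moreover have "splits \<inter> {p..<e} = splits \<inter> {q..<e}"
        using splits_repeat_label[OF te] repeat less.prems by simp
      moreover have "card (splits \<inter> {q..<e}) \<le> card (level_labels (h t) q e) * (E + 2)"
        using less.hyps[of q] repeat less.prems by simp
      ultimately show ?thesis by (metis le_trans mult_le_mono1)
    next
      case fresh
      obtain p' where p': "p < p'" "p' \<le> e" "p' < e \<Longrightarrow> h p' = h t"
        and step: "card (splits \<inter> {p..<e}) \<le> card (splits \<inter> {p'..<e}) + (E + 2)"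
        using splits_next_level[OF te _ True _ inner] less.prems by blast
      have "card (level_labels (h t) p' e) < card (level_labels (h t) p e)"
        using card_level_labels_less[OF p'(1) True less.prems(3) fresh] .
      have "card (splits \<inter> {p'..<e}) \<le> card (level_labels (h t) p' e) * (E + 2)"
      proof (cases "p' < e")
        case True
        then show ?thesis using less.hyps[of p'] p' less.prems by simp
      qed simp
      with step have "card (splits \<inter> {p..<e}) \<le> Suc (card (level_labels (h t) p' e)) * (E + 2)"
        by simp
      also have "\<dots> \<le> card (level_labels (h t) p e) * (E + 2)"
        using \<open>card _ < card _\<close> by (intro mult_le_mono1) simp
      finally show ?thesis .
    qed
  qed simp
qed

lemma splits_repeat_type:
  assumes "scope_end m h t e" "scope_end m h t' e'" "t \<le> t'" "t' < e'" "e' \<le> e"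
    and "(\<sigma> t', \<sigma> e', \<tau> t') = (\<sigma> t, \<sigma> e, \<tau> t)"
  shows "splits \<inter> {t..<e} \<subseteq> splits \<inter> {t'..<e'}"
proof (cases "t = t'")
  case True
  then show ?thesis using scope_end_unique assms(1,2) by blast
next
  case False
  then have outside: "i \<notin> splits" if "t \<le> i \<and> i < t' \<or> e' \<le> i \<and> i < e" for i
    using no_split[OF assms(1,2) _ assms(4,5) _ _ _ that] assms(3,6) by auto
  show ?thesis
  proof
    fix i assume i: "i \<in> splits \<inter> {t..<e}"
    with outside[of i] have "\<not> i < t'" "\<not> e' \<le> i" by auto
    with i show "i \<in> splits \<inter> {t'..<e'}" by simp
  qed
qed

lemma innermost_same_type:
  assumes "scope_end m h t e" "t < e"
  obtains t' e' where "t \<le> t'" "t' < e'" "e' \<le> e" "scope_end m h t' e'"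
    "(\<sigma> t', \<sigma> e', \<tau> t') = (\<sigma> t, \<sigma> e, \<tau> t)"
    "\<And>s k. t' < s \<Longrightarrow> s < k \<Longrightarrow> k \<le> e \<Longrightarrow> scope_end m h s k \<Longrightarrow>
      (\<sigma> s, \<sigma> k, \<tau> s) \<noteq> (\<sigma> t, \<sigma> e, \<tau> t)"
proof -
  define Same where "Same = {t'. t \<le> t' \<and> t' < e \<and>
    (\<exists>e'. scope_end m h t' e' \<and> t' < e' \<and> e' \<le> e \<and> (\<sigma> t', \<sigma> e', \<tau> t') = (\<sigma> t, \<sigma> e, \<tau> t))}"
  have "finite Same" by (rule finite_subset[of _ "{..<e}"]) (auto simp: Same_def)
  moreover have "t \<in> Same" using assms unfolding Same_def by auto
  ultimately have "Max Same \<in> Same" and Max_ge: "\<And>s. s \<in> Same \<Longrightarrow> s \<le> Max Same"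
    by (auto intro: Max_in)
  then obtain e' where "t \<le> Max Same" "Max Same < e'" "e' \<le> e" "scope_end m h (Max Same) e'"
    "(\<sigma> (Max Same), \<sigma> e', \<tau> (Max Same)) = (\<sigma> t, \<sigma> e, \<tau> t)"
    unfolding Same_def by blast
  moreover have "(\<sigma> s, \<sigma> k, \<tau> s) \<noteq> (\<sigma> t, \<sigma> e, \<tau> t)"
    if "Max Same < s" "s < k" "k \<le> e" "scope_end m h s k" for s k
  proof
    assume "(\<sigma> s, \<sigma> k, \<tau> s) = (\<sigma> t, \<sigma> e, \<tau> t)"
    with that \<open>t \<le> Max Same\<close> have "s \<in> Same" unfolding Same_def by auto
    with Max_ge[of s] that(1) show False by simp
  qed
  ultimately show thesis using that by blast
qed

lemma splits_le_pow:
  assumes "finite W" and "\<And>a b c. (a, b, c) \<in> W \<Longrightarrow> (a, c) \<in> L"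
    and "finite L" "card L \<le> K" "3 \<le> K"
    and "scope_end m h t e"
    and "\<And>s k. t \<le> s \<Longrightarrow> s < k \<Longrightarrow> k \<le> e \<Longrightarrow> scope_end m h s k \<Longrightarrow> (\<sigma> s, \<sigma> k, \<tau> s) \<in> W"
  shows "card (splits \<inter> {t..<e}) \<le> K ^ (card W + 1) - 3"
  \<comment> \<open>The slack \<open>3\<close> is what makes the recursion \<open>K * (K ^ n - 1) \<le> K ^ (n + 1) - 3\<close> close.\<close>
  using assms(1,2,6,7)
proof (induction "card W" arbitrary: W t e rule: less_induct)
  case less
  note types = less.prems(4)
  show ?case
  proof (cases "t < e")
    case True
    let ?w = "(\<sigma> t, \<sigma> e, \<tau> t)"
    obtain t' e' where t': "t \<le> t'" "t' < e'" "e' \<le> e" "scope_end m h t' e'"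
      "(\<sigma> t', \<sigma> e', \<tau> t') = ?w"
      and last: "\<And>s k. t' < s \<Longrightarrow> s < k \<Longrightarrow> k \<le> e \<Longrightarrow> scope_end m h s k \<Longrightarrow>
        (\<sigma> s, \<sigma> k, \<tau> s) \<noteq> ?w"
      using innermost_same_type[OF \<open>scope_end m h t e\<close> True] by blast
    have "?w \<in> W" using types[of t e] True \<open>scope_end m h t e\<close> by simp
    then have "card W > 0" using \<open>finite W\<close> card_gt_0_iff by blast
    then have card_W: "card (W - {?w}) + 1 = card W"
      using \<open>?w \<in> W\<close> by (simp add: card_Diff_singleton)
    define E where "E = K ^ card W - 3"
    have inner: "card (splits \<inter> {s..<k}) \<le> E" if "t' < s" "scope_end m h s k" "k \<le> e'" for s k
    proof -
      have "\<And>a b c. (a, b, c) \<in> W - {?w} \<Longrightarrow> (a, c) \<in> L" using less.prems(2) by blast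
      moreover have "(\<sigma> s', \<sigma> k', \<tau> s') \<in> W - {?w}"
        if "s \<le> s'" "s' < k'" "k' \<le> k" "scope_end m h s' k'" for s' k'
        using types[of s' k'] last[of s' k'] that \<open>t' < s\<close> \<open>k \<le> e'\<close> t'(1,3) by auto
      ultimately have "card (splits \<inter> {s..<k}) \<le> K ^ (card (W - {?w}) + 1) - 3"
        using less.prems(1) \<open>scope_end m h s k\<close> card_W by (intro less.hyps) auto
      then show ?thesis unfolding E_def card_W .
    qed
    have "level_labels (h t') t' e' \<subseteq> L"
    proof (rule level_labels_subset[OF t'(4)])
      show "(\<sigma> q, \<sigma> e', \<tau> q) \<in> W" if "t' \<le> q" "q < e'" "scope_end m h q e'" for q
        using types[of q e'] that t'(1,3) by simp
      show "(a, c) \<in> L" if "(a, b, c) \<in> W" for a b c using less.prems(2) that .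
    qed
    then have labels_le: "card (level_labels (h t') t' e') \<le> K"
      using card_mono[OF \<open>finite L\<close>] \<open>card L \<le> K\<close> le_trans by blast
    have "card (splits \<inter> {t'..<e'}) \<le> card (level_labels (h t') t' e') * (E + 2)"
      using splits_le_level_labels[OF t'(4) inner order.refl _ refl] t'(2) by simp
    also have "\<dots> \<le> K * (E + 2)" using labels_le by (rule mult_le_mono1)
    also have "K * (E + 2) \<le> K ^ (card W + 1) - 3"
      unfolding E_def using pow_minus_three_step[OF \<open>3 \<le> K\<close>] \<open>card W > 0\<close> by simp
    finally show ?thesis
      using card_mono[OF _ splits_repeat_type[OF \<open>scope_end m h t e\<close> t'(4,1-3,5)]] by simp
  qed simp
qed

end

section \<open>Derivation trees and controlled descents\<close>

lemma subt_append: "subt t (p @ q) = (case subt t p of None \<Rightarrow> None | Some t' \<Rightarrow> subt t' q)"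
  by (induction t p rule: subt.induct) auto

lemma subt_snoc:
  "subt t p = Some (DNode A x ts) \<Longrightarrow> subt t (p @ [i]) = (if i < length ts then Some (ts ! i) else None)"
  by (simp add: subt_append)

lemma valid_subt: "valid P t \<Longrightarrow> subt t v = Some t' \<Longrightarrow> valid P t'"
  by (induction t v rule: subt.induct) (auto split: if_splits)

lemma nodes_for_stack:
  assumes "nodes_for cs x ts" "DNode B y us \<in> set ts"
  shows "y = x"
proof -
  obtain i where "i < length ts" "ts ! i = DNode B y us" using assms(2) by (auto simp: in_set_conv_nth)
  moreover have "node_lab (ts ! i) = Some (cs ! i, x)"
    using list_all2_nthD2[OF assms(1)[unfolded nodes_for_def]] \<open>i < length ts\<close> .
  ultimately show ?thesis by simp
qed

lemma valid_children_stack: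
  assumes "valid P (DNode A x ts)"
  obtains x' where "length x' \<le> Suc (length x)" "\<And>B y us. DNode B y us \<in> set ts \<Longrightarrow> y = x'"
proof -
  from assms have "step_ok P A x ts" by simp
  then obtain p where "p \<in> P" and step: "case p of
      Plain B r \<Rightarrow> B = A \<and> (\<exists>cs. r = map NT cs \<and> nodes_for cs x ts)
    | Push B C f \<Rightarrow> B = A \<and> (\<exists>t. ts = [t] \<and> node_lab t = Some (C, f # x))
    | Pop B f r \<Rightarrow> B = A \<and> (\<exists>y. x = f # y \<and>
          ((\<exists>s. r = map TM s \<and> ts = [DLeaf s])
           \<or> (\<exists>cs. cs \<noteq> [] \<and> r = map NT cs \<and> nodes_for cs y ts)))"
    unfolding step_ok_def by blast
  show thesis
  proof (cases p)
    case Plain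
    with step obtain cs where "nodes_for cs x ts" by auto
    show thesis
    proof (rule that[of x])
      show "y = x" if "DNode B y us \<in> set ts" for B y us
        using nodes_for_stack[OF \<open>nodes_for cs x ts\<close> that] .
    qed simp
  next
    case (Push B C f)
    with step obtain t where "ts = [t]" "node_lab t = Some (C, f # x)" by auto
    show thesis
    proof (rule that[of "f # x"])
      show "y = f # x" if "DNode B' y us \<in> set ts" for B' y us
        using that \<open>ts = [t]\<close> \<open>node_lab t = _\<close> by auto
    qed simp
  next
    case (Pop B f r)
    with step obtain y where y: "x = f # y"
      and children: "(\<exists>s. ts = [DLeaf s]) \<or> (\<exists>cs. nodes_for cs y ts)" by auto
    show thesis
    proof (rule that[of y])
      show "length y \<le> Suc (length x)" using y by simp
      show "y' = y" if "DNode B y' us \<in> set ts" for B y' us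
        using children
      proof
        assume "\<exists>s. ts = [DLeaf s]"
        with that show ?thesis by auto
      next
        assume "\<exists>cs. nodes_for cs y ts"
        then obtain cs where "nodes_for cs y ts" ..
        from nodes_for_stack[OF this that] show ?thesis .
      qed
    qed
  qed
qed

lemma child_eta_uniform:
  assumes "valid P D" "internal D v"
  obtains n where "n \<le> Suc (eta D v)" "\<And>w. child D v w \<Longrightarrow> internal D w \<Longrightarrow> eta D w = n"
proof -
  obtain A x ts where v: "subt D v = Some (DNode A x ts)" using assms(2) unfolding internal_def by auto
  obtain x' where x': "length x' \<le> Suc (length x)" "\<And>B y us. DNode B y us \<in> set ts \<Longrightarrow> y = x'"
    using valid_children_stack[OF valid_subt[OF assms(1) v]] by blast
  have children: "eta D w = length x'" if w: "child D v w" "internal D w" for w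
  proof -
    obtain i where i: "w = v @ [i]" using w(1) unfolding child_def by blast
    obtain B y us where sw: "subt D w = Some (DNode B y us)" using w(2) unfolding internal_def by blast
    have "i < length ts" "ts ! i = DNode B y us" using subt_snoc[OF v, of i] i sw by (auto split: if_splits)
    then have "DNode B y us \<in> set ts" by (auto simp: in_set_conv_nth)
    then show ?thesis using x'(2) sw unfolding eta_def by simp
  qed
  moreover have "eta D v = length x" using v unfolding eta_def by simp
  ultimately show thesis using x'(1) by (intro that[of "length x'"]) simp_all
qed

lemma scope_trans:
  assumes ab: "scope D a b" and bc: "scope D b c"
  shows "scope D a c"
  unfolding scope_def
proof (intro conjI allI impI)
  show "internal D a" "internal D c" "prefix a c" using ab bc unfolding scope_def by auto
  fix u assume u: "prefix a u \<and> prefix u c"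
  have "prefix b c" "eta D a \<le> eta D b" using ab bc unfolding scope_def by auto
  then consider "prefix u b" | "prefix b u" using u prefix_same_cases by blast
  then show "eta D a \<le> eta D u"
  proof cases
    case 1
    then show ?thesis using ab u unfolding scope_def by blast
  next
    case 2
    then have "eta D b \<le> eta D u" using bc u unfolding scope_def by blast
    with \<open>eta D a \<le> eta D b\<close> show ?thesis by simp
  qed
qed

definition split_set :: "('n, 't, 'f) dtree \<Rightarrow> nat set \<Rightarrow> nat list list \<Rightarrow> nat set" where
  "split_set D M H = {i. Suc i < length H \<and> split_at D M H i}"

lemma nsplits_split_set: "nsplits D M H = card (split_set D M H \<inter> {0..<length H - 1})"
proof -
  have "split_set D M H \<inter> {0..<length H - 1} = split_set D M H" unfolding split_set_def by auto
  then show ?thesis unfolding nsplits_def split_set_def by simp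
qed

context
  fixes D :: "('n, 't, 'f) dtree" and H :: "nat list list"
  assumes ctl: "controlled D H"
begin

lemma controlled_length_pos: "0 < length H"
  using ctl unfolding controlled_def descent_def by simp

lemma controlled_internal: "k < length H \<Longrightarrow> internal D (H ! k)"
  using ctl unfolding controlled_def descent_def by auto

lemma controlled_child: "Suc k < length H \<Longrightarrow> child D (H ! k) (H ! Suc k)"
proof -
  assume "Suc k < length H"
  moreover have "\<forall>i. 0 < i \<and> i < length H \<longrightarrow> child D (H ! (i - 1)) (H ! i)"
    using ctl unfolding controlled_def by blast
  ultimately show ?thesis by auto
qed

lemma controlled_last_in_beta: "H ! (length H - 1) \<in> beta D (H ! 0)"
proof -
  have "H \<noteq> []" "last H \<in> beta D (hd H)" using ctl unfolding controlled_def descent_def by auto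
  then show ?thesis by (simp add: hd_conv_nth last_conv_nth)
qed

lemma controlled_nth_prefix:
  assumes "i \<le> k" "k < length H"
  shows "prefix (H ! i) (H ! k) \<and> length (H ! k) = length (H ! i) + (k - i)"
  using assms
proof (induction k rule: dec_induct)
  case (step k)
  obtain c where "H ! Suc k = H ! k @ [c]" using controlled_child[OF step.prems] unfolding child_def by auto
  with step show ?case by (auto intro: prefix_order.trans)
qed simp

lemma controlled_prefix_between:
  assumes "i \<le> k" "k < length H" "prefix (H ! i) u" "prefix u (H ! k)"
  obtains l where "i \<le> l" "l \<le> k" "u = H ! l"
proof -
  define l where "l = i + (length u - length (H ! i))"
  have "length (H ! i) \<le> length u" "length u \<le> length (H ! k)"
    using assms(3,4) prefix_length_le by blast+
  then have "i \<le> l" "l \<le> k" using controlled_nth_prefix[OF assms(1,2)] assms(1) unfolding l_def by arith+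
  then have "prefix (H ! l) (H ! k)" "length (H ! l) = length u"
    using controlled_nth_prefix[of l k] controlled_nth_prefix[of i l] assms(2) \<open>length (H ! i) \<le> length u\<close>
    unfolding l_def by auto
  then have "prefix u (H ! l)" "prefix (H ! l) u"
    using prefix_length_prefix[OF assms(4)] prefix_length_prefix[OF _ assms(4)] by simp_all
  then have "u = H ! l" by (rule prefix_order.antisym)
  with \<open>i \<le> l\<close> \<open>l \<le> k\<close> show thesis using that by blast
qed

lemma controlled_scope_iff:
  assumes "i \<le> k" "k < length H"
  shows "scope D (H ! i) (H ! k) \<longleftrightarrow> (\<forall>l. i \<le> l \<and> l \<le> k \<longrightarrow> eta D (H ! i) \<le> eta D (H ! l))"
proof
  assume "scope D (H ! i) (H ! k)"
  then have "eta D (H ! i) \<le> eta D (H ! l)" if "i \<le> l" "l \<le> k" for l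
    using controlled_nth_prefix[of i l] controlled_nth_prefix[of l k] that assms(2)
    unfolding scope_def by auto
  then show "\<forall>l. i \<le> l \<and> l \<le> k \<longrightarrow> eta D (H ! i) \<le> eta D (H ! l)" by blast
next
  assume "\<forall>l. i \<le> l \<and> l \<le> k \<longrightarrow> eta D (H ! i) \<le> eta D (H ! l)"
  moreover have "internal D (H ! i)" "internal D (H ! k)" using controlled_internal assms by auto
  moreover have "eta D (H ! i) \<le> eta D u" if "prefix (H ! i) u" "prefix u (H ! k)" for u
    using controlled_prefix_between[OF assms that] calculation(1) by blast
  ultimately show "scope D (H ! i) (H ! k)"
    using controlled_nth_prefix[OF assms] unfolding scope_def by blast
qed

end

context
  fixes P and D :: "('n, 't, 'f) dtree" and H :: "nat list list"
  assumes ctl: "controlled D H" and valid: "valid P D"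
begin

lemma controlled_eta_Suc_le:
  assumes "Suc i < length H"
  shows "eta D (H ! Suc i) \<le> Suc (eta D (H ! i))"
proof -
  have "i < length H" using assms by simp
  then obtain n where "n \<le> Suc (eta D (H ! i))"
    and uniform: "\<And>w. child D (H ! i) w \<Longrightarrow> internal D w \<Longrightarrow> eta D w = n"
    using child_eta_uniform[OF valid controlled_internal[OF ctl]] by blast
  moreover have "eta D (H ! Suc i) = n"
    using uniform[OF controlled_child[OF ctl assms] controlled_internal[OF ctl assms]] .
  ultimately show ?thesis by simp
qed

lemma controlled_beta_imp_scope_end:
  assumes "i \<le> k" "k < length H" "H ! k \<in> beta D (H ! i)"
  shows "scope_end (length H - 1) (\<lambda>j. eta D (H ! j)) i k"
proof -
  have "scope D (H ! i) (H ! k)" and outside: "\<And>w. child D (H ! k) w \<Longrightarrow> \<not> scope D (H ! i) w"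
    using assms(3) unfolding beta_def by auto
  then have below: "\<forall>l. i \<le> l \<and> l \<le> k \<longrightarrow> eta D (H ! i) \<le> eta D (H ! l)"
    using controlled_scope_iff[OF ctl assms(1,2)] by blast
  moreover have "k = length H - 1 \<or> eta D (H ! Suc k) < eta D (H ! i)"
  proof (cases "Suc k < length H")
    case True
    have "\<not> scope D (H ! i) (H ! Suc k)" using outside controlled_child[OF ctl True] by blast
    then show ?thesis
      using controlled_scope_iff[OF ctl _ True, of i] assms(1) below by (auto simp: le_Suc_eq)
  next
    case False
    with assms(2) show ?thesis by linarith
  qed
  ultimately show ?thesis using assms(1,2) unfolding scope_end_def by simp
qed

lemma controlled_scope_end_imp_beta:
  assumes "scope_end (length H - 1) (\<lambda>j. eta D (H ! j)) i k"
  shows "H ! k \<in> beta D (H ! i)"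
proof -
  have "i \<le> k" "k \<le> length H - 1" using assms unfolding scope_end_def by auto
  moreover have "0 < length H" by (rule controlled_length_pos[OF ctl])
  ultimately have "i \<le> k" "k < length H" by linarith+
  then have scope: "scope D (H ! i) (H ! k)"
    using controlled_scope_iff[OF ctl] assms unfolding scope_end_def by blast
  have "\<not> scope D (H ! i) w" if "child D (H ! k) w" for w
  proof
    assume w: "scope D (H ! i) w"
    show False
    proof (cases "Suc k < length H")
      case True
      then have "eta D (H ! Suc k) < eta D (H ! i)" using assms unfolding scope_end_def by auto
      moreover obtain n where uniform: "\<And>w. child D (H ! k) w \<Longrightarrow> internal D w \<Longrightarrow> eta D w = n"
        using child_eta_uniform[OF valid controlled_internal[OF ctl \<open>k < length H\<close>]] by blast
      moreover have "internal D w" "eta D (H ! i) \<le> eta D w" using w unfolding scope_def by auto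
      ultimately show False
        using uniform[OF that] uniform[OF controlled_child[OF ctl True] controlled_internal[OF ctl True]]
        by simp
    next
      case False
      then have "k = length H - 1" using \<open>k < length H\<close> by linarith
      then have last: "H ! k \<in> beta D (H ! 0)" using controlled_last_in_beta[OF ctl] by simp
      then have "\<forall>l. l \<le> k \<longrightarrow> eta D (H ! 0) \<le> eta D (H ! l)"
        using controlled_scope_iff[OF ctl _ \<open>k < length H\<close>, of 0] unfolding beta_def by simp
      then have "scope D (H ! 0) (H ! i)"
        using controlled_scope_iff[OF ctl, of 0 i] \<open>i \<le> k\<close> \<open>k < length H\<close> by simp
      then have "scope D (H ! 0) w" using w by (rule scope_trans)
      then show False using last that unfolding beta_def by blast
    qed
  qed
  with scope show ?thesis unfolding beta_def by blast
qed

lemma controlled_scope_end_last: "scope_end (length H - 1) (\<lambda>j. eta D (H ! j)) 0 (length H - 1)"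
  using controlled_beta_imp_scope_end[of 0 "length H - 1"] controlled_last_in_beta[OF ctl]
    controlled_length_pos[OF ctl] by simp

lemma respects_W_scope_end:
  assumes "respects_W N D M W H" "s < k" "scope_end (length H - 1) (\<lambda>j. eta D (H ! j)) s k"
  shows "(sigma D (H ! s), sigma D (H ! k), tau N D M (H ! s)) \<in> W"
proof -
  have "k < length H" using assms(3) controlled_length_pos[OF ctl] unfolding scope_end_def by linarith
  then show ?thesis
    using assms(1,2) controlled_scope_end_imp_beta[OF assms(3)] unfolding respects_W_def by blast
qed

lemma controlled_limited_profile:
  assumes "limited N D M H"
  shows "limited_profile (length H - 1) (\<lambda>j. eta D (H ! j))
    (split_set D M H) (\<lambda>j. sigma D (H ! j)) (\<lambda>j. tau N D M (H ! j))"
proof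
  show "eta D (H ! Suc i) \<le> Suc (eta D (H ! i))" if "i < length H - 1" for i
    using controlled_eta_Suc_le that by simp
next
  fix b1 b2 t1 t2 i
  assume "scope_end (length H - 1) (\<lambda>j. eta D (H ! j)) b1 b2"
    "scope_end (length H - 1) (\<lambda>j. eta D (H ! j)) t1 t2"
    and "b1 < t1" "t1 < t2" "t2 \<le> b2" "sigma D (H ! b1) = sigma D (H ! t1)"
    "sigma D (H ! t2) = sigma D (H ! b2)" "tau N D M (H ! b1) = tau N D M (H ! t1)"
    "b1 \<le> i \<and> i < t1 \<or> t2 \<le> i \<and> i < b2"
  moreover from this have "b2 \<le> length H - 1" unfolding scope_end_def by simp
  then have "b2 < length H" using controlled_length_pos[OF ctl] by linarith
  ultimately show "i \<notin> split_set D M H"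
    using assms controlled_scope_end_imp_beta unfolding limited_def split_set_def by blast
qed

end

lemma Rtrip_subset_image:
  "Rtrip N \<subseteq> (\<lambda>f. ({x\<in>N. f x = 0}, {x\<in>N. f x = 1}, {x\<in>N. f x = 2})) ` PiE N (\<lambda>_. {0, 1, 2 :: nat})"
proof
  fix t assume "t \<in> Rtrip N"
  then obtain a b c where t: "t = (a, b, c)" and "a \<inter> b = {}" "a \<inter> c = {}" "b \<inter> c = {}" "a \<union> b \<union> c = N"
    unfolding Rtrip_def by auto
  define f where "f = restrict (\<lambda>x. if x \<in> a then 0 else if x \<in> b then 1 else 2 :: nat) N"
  have "f \<in> PiE N (\<lambda>_. {0, 1, 2})" unfolding f_def by simp
  moreover have "t = ({x\<in>N. f x = 0}, {x\<in>N. f x = 1}, {x\<in>N. f x = 2})"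
    unfolding t f_def using \<open>a \<inter> b = {}\<close> \<open>a \<inter> c = {}\<close> \<open>b \<inter> c = {}\<close> \<open>a \<union> b \<union> c = N\<close> by auto
  ultimately show "t \<in> (\<lambda>f. ({x\<in>N. f x = 0}, {x\<in>N. f x = 1}, {x\<in>N. f x = 2})) ` PiE N (\<lambda>_. {0, 1, 2 :: nat})"
    by blast
qed

lemma card_Rtrip:
  assumes "finite N"
  shows "card (Rtrip N) \<le> 3 ^ card N"
proof -
  have "finite (PiE N (\<lambda>_. {0, 1, 2 :: nat}))" using assms by (simp add: finite_PiE)
  then have "card (Rtrip N) \<le> card (PiE N (\<lambda>_. {0, 1, 2 :: nat}))"
    using card_mono[OF finite_imageI Rtrip_subset_image] card_image_le le_trans by blast
  also have "\<dots> = 3 ^ card N" using assms by (simp add: card_PiE numeral_3_eq_3)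
  finally show ?thesis .
qed

lemma three_le_mult_three_pow:
  fixes n :: nat
  assumes "0 < n"
  shows "3 \<le> n * 3 ^ n"
proof -
  have "(3::nat) ^ 1 \<le> 3 ^ n" using assms by (intro power_increasing) simp_all
  also have "\<dots> \<le> n * 3 ^ n" using assms by simp
  finally show ?thesis by simp
qed

lemma finite_Rtrip: "finite N \<Longrightarrow> finite (Rtrip N)"
  by (rule finite_subset[of _ "Pow N \<times> Pow N \<times> Pow N"]) (auto simp: Rtrip_def)

theorem lemma4:
  fixes N :: "'n set" and T :: "'t set" and F :: "'f set"
    and P :: "('n, 't, 'f) prod set" and S :: 'n
    and D :: "('n, 't, 'f) dtree" and M :: "nat set"
    and W :: "('n \<times> 'n \<times> ('n set \<times> 'n set \<times> 'n set)) set"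
    and H :: "nat list list"
  assumes "grounded N T F P S"
    and "is_dtree P S D"
    and "M \<subseteq> {..<length (yield D)}"
    and "W \<subseteq> N \<times> N \<times> Rtrip N"
    and "controlled D H"
    and "limited N D M H"
    and "respects_W N D M W H"
  shows "nsplits D M H \<le> (card N * 3 ^ card N) ^ (card W + 1)"
proof -
  \<comment> \<open>Of the grammar only \<open>finite N\<close> and \<open>N \<noteq> {}\<close> matter.\<close>
  have valid: "valid P D" using assms(2) unfolding is_dtree_def by blast
  have "finite N" "S \<in> N" using assms(1) unfolding grounded_def indexed_grammar_def by auto
  interpret limited_profile "length H - 1" "\<lambda>j. eta D (H ! j)" "split_set D M H"
    "\<lambda>j. sigma D (H ! j)" "\<lambda>j. tau N D M (H ! j)"
    using controlled_limited_profile[OF assms(5) valid assms(6)] .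
  have "card (split_set D M H \<inter> {0..<length H - 1}) \<le> (card N * 3 ^ card N) ^ (card W + 1) - 3"
  proof (rule splits_le_pow[where L = "N \<times> Rtrip N"])
    show "finite W" "finite (N \<times> Rtrip N)"
      using assms(4) \<open>finite N\<close> finite_Rtrip finite_subset by blast+
    show "card (N \<times> Rtrip N) \<le> card N * 3 ^ card N"
      using card_Rtrip[OF \<open>finite N\<close>] by (simp add: card_cartesian_product)
    show "3 \<le> card N * 3 ^ card N"
      using \<open>finite N\<close> \<open>S \<in> N\<close> card_gt_0_iff three_le_mult_three_pow by blast
  qed (use assms(4) respects_W_scope_end[OF assms(5) valid assms(7)]
      controlled_scope_end_last[OF assms(5) valid] in auto)
  then show ?thesis unfolding nsplits_split_set by simp
qed

end
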